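(* For all integers $k\ge\ell\ge0$, $F_{k,\ell}$ equals the $(\widetilde I_0,I_0)$ entry of the matrix $\widetilde{\mathbf T}^{\ell}\,\mathbf U\,\mathbf T^{k-\ell}$, where $I_0=[0,a-1]$ and $\widetilde I_0=[0,a-2]$ (the empty set if $a=1$). In particular $F_{k,0}=F_k$.
   Context: Let $S$ be a finite set of integers with $a:=\max S\ge 1$ and $b:=-\min S\ge 1$. Each $s\in S$ carries a weight $\omega_s$ in a field $K$ of characteristic $0$; set $\omega_s:=0$ for $s\in\mathbb Z\setminus S$, and for $s\in\mathbb Z$ put $\beta_s:=\delta_{s,0}-\omega_s$ and $\widetilde\beta_s:=-\beta_{s+1}$. For $k\ge0$, $A_k$ is the $(k+1)\times(k+1)$ matrix with rows and columns indexed by $0,\dots,k$ whose $(i,j)$ entry is $\omega_{j-i}$. Put $F_0:=1$ and $F_k:=\det(1-A_{k-1})$ for $k\ge1$. For $0\le\ell\le k$, $F_{k,\ell}$ is the $(\ell,0)$ cofactor of $1-A_k$, i.e. $(-1)^\ell$ times the determinant of the matrix obtained from $1-A_k$ by deleting row $\ell$ and column $0$. Notation: $[m,n]:=\{i\in\mathbb Z: m\le i\le n\}$, $X+c:=\{x+c:x\in X\}$; an $n$-subset is a subset of cardinality $n$. For a finite set $I\subseteq\mathbb Z$ and $s\in\mathbb Z$, $\epsilon_s(I):=(-1)^{\#\{i\in I:\ i<s\}}$. $\mathbf T$ is the square matrix with rows and columns indexed by the $a$-subsets of $[-b,a-1]$ and entries $\mathbf T[I,J]:=\epsilon_s(I)\beta_s$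 if there is an integer $s$ with $I\cup\{a\}=(J+1)\cup\{s\}$ (such $s$ is then unique), and $0$ otherwise. $\widetilde{\mathbf T}$ is the square matrix indexed by the $(a-1)$-subsets of $[-b-1,a-2]$ with $\widetilde{\mathbf T}[I,J]:=\epsilon_s(I)\widetilde\beta_s$ if there is an integer $s$ with $I\cup\{a-1\}=(J+1)\cup\{s\}$, and $0$ otherwise. $\mathbf U$ is the matrix with rows indexed by the $(a-1)$-subsets of $[-b-1,a-2]$ and columns by the $a$-subsets of $[-b,a-1]$, with $\mathbf U[I,J]=1$ if $I\cup\{a-1\}=J$ and $0$ otherwise. *)

theory Defs
  imports "Jordan_Normal_Form.Determinant"
begin

definition wt :: "int set \<Rightarrow> (int \<Rightarrow> 'a::field_char_0) \<Rightarrow> int \<Rightarrow> 'a" where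
  "wt S w s = (if s \<in> S then w s else 0)"

definition beta :: "int set \<Rightarrow> (int \<Rightarrow> 'a::field_char_0) \<Rightarrow> int \<Rightarrow> 'a" where
  "beta S w s = (if s = 0 then 1 else 0) - wt S w s"

definition betat :: "int set \<Rightarrow> (int \<Rightarrow> 'a::field_char_0) \<Rightarrow> int \<Rightarrow> 'a" where
  "betat S w s = - beta S w (s + 1)"

definition Amat :: "int set \<Rightarrow> (int \<Rightarrow> 'a::field_char_0) \<Rightarrow> nat \<Rightarrow> 'a mat" where
  "Amat S w k = mat (k+1) (k+1) (\<lambda>(i,j). wt S w (int j - int i))"

definition Fk :: "int set \<Rightarrow> (int \<Rightarrow> 'a::field_char_0) \<Rightarrow> nat \<Rightarrow> 'a" where
  "Fk S w k = (if k = 0 then 1 else det (1\<^sub>m k - Amat S w (k - 1)))"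

definition Fkl :: "int set \<Rightarrow> (int \<Rightarrow> 'a::field_char_0) \<Rightarrow> nat \<Rightarrow> nat \<Rightarrow> 'a" where
  "Fkl S w k l = cofactor (1\<^sub>m (k+1) - Amat S w k) l 0"

definition shift :: "int set \<Rightarrow> int \<Rightarrow> int set" where
  "shift X c = (\<lambda>x. x + c) ` X"

definition eps :: "int \<Rightarrow> int set \<Rightarrow> 'a::field_char_0" where
  "eps s I = (-1) ^ card {i \<in> I. i < s}"

definition subsets_of :: "nat \<Rightarrow> int set \<Rightarrow> int set set" where
  "subsets_of n X = {I. I \<subseteq> X \<and> card I = n}"

definition transfer :: "int \<Rightarrow> (int \<Rightarrow> 'a::field_char_0) \<Rightarrow> int set \<Rightarrow> int set \<Rightarrow> 'a" where
  "transfer c bt I J =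
     (if \<exists>s. I \<union> {c} = shift J 1 \<union> {s}
      then (let s = (THE s. I \<union> {c} = shift J 1 \<union> {s}) in eps s I * bt s)
      else 0)"

definition Tmat :: "int set \<Rightarrow> (int \<Rightarrow> 'a::field_char_0) \<Rightarrow> int \<Rightarrow> int set \<Rightarrow> int set \<Rightarrow> 'a" where
  "Tmat S w a = transfer a (beta S w)"

definition Ttmat :: "int set \<Rightarrow> (int \<Rightarrow> 'a::field_char_0) \<Rightarrow> int \<Rightarrow> int set \<Rightarrow> int set \<Rightarrow> 'a" where
  "Ttmat S w a = transfer (a - 1) (betat S w)"

definition Umat :: "int \<Rightarrow> int set \<Rightarrow> int set \<Rightarrow> 'a::field_char_0" where
  "Umat a I J = (if I \<union> {a - 1} = J then 1 else 0)"

definition mmul :: "'i set \<Rightarrow> ('i \<Rightarrow> 'i \<Rightarrow> 'a::field_char_0) \<Rightarrow> ('i \<Rightarrow> 'i \<Rightarrow> 'a) \<Rightarrow> 'i \<Rightarrow> 'i \<Rightarrow> 'a" where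
  "mmul X f g I J = (\<Sum>K\<in>X. f I K * g K J)"

fun mpow :: "'i set \<Rightarrow> ('i \<Rightarrow> 'i \<Rightarrow> 'a::field_char_0) \<Rightarrow> nat \<Rightarrow> 'i \<Rightarrow> 'i \<Rightarrow> 'a" where
  "mpow X f 0 = (\<lambda>I J. if I = J then 1 else 0)"
| "mpow X f (Suc n) = mmul X (mpow X f n) f"

end

theory Submission
  imports Defs
begin

text \<open>Delete row \<open>\<ell>\<close> and column \<open>0\<close> of \<open>1 - A\<^sub>k\<close> and expand the resulting determinant along its
  rows in increasing order.  The \<open>(r, c)\<close> entry is \<open>\<beta>\<^sub>c\<^sub>-\<^sub>r\<close>, which vanishes unless \<open>-b \<le> c - r \<le> a\<close>,
  so row \<open>r\<close> can only use a column of the window \<open>[r - b, r + a]\<close>.  The still unused columns of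
  the window, translated back by \<open>r\<close>, form the state of the expansion, and expanding one row is
  one multiplication by \<open>T\<close>: the chosen column is \<open>r + s\<close> and \<open>\<epsilon>\<^sub>s\<close> is its Laplace sign.
  Above the deleted row the columns are one step ahead of the rows, which produces \<open>betat\<close> instead
  of \<open>beta\<close> and states of size \<open>a - 1\<close>; \<open>U\<close> adds the missing column when the deleted row is
  passed.  Padding the columns with \<open>k + 1, \<dots>, k + a\<close> keeps the window full to the end, and the
  final state \<open>[0, a - 1]\<close> records that exactly the padding is left unused.\<close>

lemma mem_shift: "x \<in> shift A c \<longleftrightarrow> x - c \<in> A"
  unfolding shift_def by (auto simp: image_iff) (metis diff_add_cancel)

lemma shift_shift [simp]: "shift (shift A c) d = shift A (c + d)"
  unfolding shift_def by (simp add: image_image add.assoc)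

lemma shift_0 [simp]: "shift A 0 = A"
  unfolding shift_def by simp

lemma shift_inj: "shift A c = shift B c \<longleftrightarrow> A = B"
  by (metis add.right_inverse shift_0 shift_shift)

lemma shift_diff: "shift (A - B) c = shift A c - shift B c"
  unfolding shift_def by (rule image_set_diff) (simp add: inj_on_def)

lemma shift_insert [simp]: "shift (insert x A) c = insert (x + c) (shift A c)"
  unfolding shift_def by simp

lemma shift_empty [simp]: "shift {} c = {}"
  unfolding shift_def by simp

lemma shift_atLeastAtMost [simp]: "shift {x..y} c = {x + c..y + c}"
  by (auto simp: mem_shift)

lemma card_shift [simp]: "card (shift A c) = card A"
  unfolding shift_def by (rule card_image) (simp add: inj_on_def)

lemma finite_shift [simp]: "finite (shift A c) = finite A"
  unfolding shift_def by (rule finite_image_iff) (simp add: inj_on_def)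

lemma finite_subsets_of_atLeastAtMost: "finite (subsets_of n {lo..hi})"
  by (rule finite_subset[of _ "Pow {lo..hi}"]) (auto simp: subsets_of_def)

lemma mmul_assoc: "mmul X (mmul Y f g) h = mmul Y f (mmul X g h)"
  unfolding mmul_def
  by (auto simp: fun_eq_iff sum_distrib_left sum_distrib_right mult.assoc intro: sum.swap)

lemma mmul_mpow_0:
  assumes "finite X" "I \<in> X"
  shows "mmul X (mpow X f 0) g I J = g I J"
  using assms by (simp add: mmul_def if_distrib[of "\<lambda>x. x * _"] cong: if_cong)

lemma mpow_Suc_left:
  assumes "finite X" "I \<in> X" "J \<in> X"
  shows "mpow X f (Suc n) I J = mmul X f (mpow X f n) I J"
  using assms(2,3)
proof (induction n arbitrary: I J)
  case 0
  then show ?case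
    using assms(1)
    by (simp add: mmul_def if_distrib[of "\<lambda>x. x * f _ _"] if_distrib[of "\<lambda>x. f _ _ * x"] cong: if_cong)
next
  case (Suc n)
  have "mpow X f (Suc (Suc n)) I J = (\<Sum>K\<in>X. mpow X f (Suc n) I K * f K J)"
    by (simp add: mmul_def)
  also have "\<dots> = (\<Sum>K\<in>X. mmul X f (mpow X f n) I K * f K J)"
    using Suc by (intro sum.cong) auto
  also have "\<dots> = mmul X (mmul X f (mpow X f n)) f I J"
    by (simp only: mmul_def[of X "mmul X f (mpow X f n)" f])
  also have "\<dots> = mmul X f (mpow X f (Suc n)) I J"
    by (simp add: mmul_assoc)
  finally show ?case .
qed

lemma transfer_eq:
  assumes "s \<in> insert c J"
  shows "transfer c bt J (shift (insert c J - {s}) (-1)) = eps s J * bt s"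
proof -
  let ?K = "shift (insert c J - {s}) (-1)"
  have split: "J \<union> {c} = shift ?K 1 \<union> {s}"
    using assms by auto
  have "(THE t. J \<union> {c} = shift ?K 1 \<union> {t}) = s"
  proof (rule the_equality)
    fix t assume "J \<union> {c} = shift ?K 1 \<union> {t}"
    then have "insert c J = (insert c J - {s}) \<union> {t}"
      by simp
    then show "t = s"
      using assms by blast
  qed (rule split)
  with split show ?thesis
    unfolding transfer_def by (auto simp: Let_def)
qed

lemma transfer_eq_0:
  assumes "finite K" "card K = card J" "finite J" "c \<notin> J"
    and "K \<notin> (\<lambda>s. shift (insert c J - {s}) (-1)) ` insert c J"
  shows "transfer c bt J K = 0"
proof (rule ccontr)
  assume "transfer c bt J K \<noteq> 0"
  then obtain s where split: "insert c J = shift K 1 \<union> {s}"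
    unfolding transfer_def by (auto split: if_splits)
  have "s \<notin> shift K 1"
  proof
    assume "s \<in> shift K 1"
    then have "insert c J = shift K 1"
      using split by blast
    then show False
      using assms(1-4) by (metis card_insert_disjoint card_shift n_not_Suc_n)
  qed
  then have "shift K 1 = insert c J - {s}" "s \<in> insert c J"
    using split by auto
  moreover have "K = shift (shift K 1) (-1)"
    by simp
  ultimately show False
    using assms(5) by auto
qed

lemma sum_transfer:
  assumes "finite X" "\<And>K. K \<in> X \<Longrightarrow> finite K \<and> card K = card J" "finite J" "c \<notin> J"
  shows "(\<Sum>K\<in>X. transfer c bt J K * g K)
       = (\<Sum>s | s \<in> insert c J \<and> shift (insert c J - {s}) (-1) \<in> X.
            eps s J * bt s * g (shift (insert c J - {s}) (-1)))"
proof -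
  define Ks where "Ks s = shift (insert c J - {s}) (-1)" for s
  have "inj_on Ks (insert c J)"
  proof (rule inj_onI)
    fix s t assume "s \<in> insert c J" "t \<in> insert c J" "Ks s = Ks t"
    then have "insert c J - {s} = insert c J - {t}"
      by (simp add: Ks_def shift_inj)
    with \<open>s \<in> insert c J\<close> \<open>t \<in> insert c J\<close> show "s = t"
      by blast
  qed
  then have inj: "inj_on Ks {s \<in> insert c J. Ks s \<in> X}"
    by (rule inj_on_subset) blast
  have "(\<Sum>K\<in>X. transfer c bt J K * g K) = (\<Sum>K\<in>Ks ` {s \<in> insert c J. Ks s \<in> X}. transfer c bt J K * g K)"
    using assms by (intro sum.mono_neutral_right) (auto intro!: transfer_eq_0 simp: Ks_def)
  also have "\<dots> = (\<Sum>s | s \<in> insert c J \<and> Ks s \<in> X. transfer c bt J (Ks s) * g (Ks s))"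
    using sum.reindex[OF inj] by (simp add: comp_def)
  also have "\<dots> = (\<Sum>s | s \<in> insert c J \<and> Ks s \<in> X. eps s J * bt s * g (Ks s))"
    by (rule sum.cong) (auto simp: Ks_def transfer_eq)
  finally show ?thesis
    unfolding Ks_def .
qed

text \<open>Successive Laplace expansion of the rows \<open>rs\<close> of \<open>B\<close> along the column set \<open>C\<close>, keeping only
  the terms in which exactly the columns \<open>F\<close> are left over; for \<open>F = {}\<close> this is the minor
  with rows \<open>rs\<close> and columns \<open>C\<close>.\<close>
fun laplace_minor :: "(int \<Rightarrow> int \<Rightarrow> 'a::field_char_0) \<Rightarrow> int list \<Rightarrow> int set \<Rightarrow> int set \<Rightarrow> 'a" where
  "laplace_minor B [] C F = (if C = F then 1 else 0)"
| "laplace_minor B (r # rs) C F = (\<Sum>c\<in>C. eps c C * B r c * laplace_minor B rs (C - {c}) F)"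

lemma laplace_minor_eq_0_if_not_subset: "\<not> F \<subseteq> C \<Longrightarrow> laplace_minor B rs C F = 0"
proof (induction rs arbitrary: C)
  case (Cons r rs)
  then have "\<not> F \<subseteq> C - {c}" for c
    by auto
  with Cons.IH show ?case
    by simp
qed auto

lemma laplace_minor_eq_0_if_zero_column:
  assumes "x \<in> C" "x \<notin> F" "\<forall>r\<in>set rs. B r x = 0"
  shows "laplace_minor B rs C F = 0"
  using assms
proof (induction rs arbitrary: C)
  case (Cons r rs)
  have "eps c C * B r c * laplace_minor B rs (C - {c}) F = 0" if "c \<in> C" for c
    using Cons that by (cases "c = x") auto
  then show ?case
    unfolding laplace_minor.simps by (intro sum.neutral) blast
qed auto

lemma eps_cong: "{i \<in> I. i < s} = {i \<in> J. i < s} \<Longrightarrow> eps s I = eps s J"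
  unfolding eps_def by simp

lemma laplace_minor_remove_top_columns:
  assumes "finite C" "F \<subseteq> C" "\<forall>x\<in>F. \<forall>y\<in>C - F. y < x"
  shows "laplace_minor B rs C F = laplace_minor B rs (C - F) {}"
  using assms
proof (induction rs arbitrary: C)
  case (Cons r rs)
  have "laplace_minor B (r # rs) C F = (\<Sum>c\<in>C - F. eps c C * B r c * laplace_minor B rs (C - {c}) F)"
    unfolding laplace_minor.simps using Cons.prems
    by (intro sum.mono_neutral_right) (auto intro!: laplace_minor_eq_0_if_not_subset)
  also have "\<dots> = (\<Sum>c\<in>C - F. eps c (C - F) * B r c * laplace_minor B rs (C - F - {c}) {})"
  proof (rule sum.cong[OF refl])
    fix c assume c: "c \<in> C - F"
    have "eps c C = (eps c (C - F) :: 'a)"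
      using Cons.prems(3) c by (intro eps_cong) (auto dest: less_asym)
    moreover have "C - {c} - F = C - F - {c}"
      by blast
    then have "laplace_minor B rs (C - {c}) F = laplace_minor B rs (C - F - {c}) {}"
      using Cons.IH[of "C - {c}"] Cons.prems c by auto
    ultimately show "eps c C * B r c * laplace_minor B rs (C - {c}) F
        = eps c (C - F) * B r c * laplace_minor B rs (C - F - {c}) {}"
      by simp
  qed
  finally show ?case
    by simp
qed simp

lemma nth_remove1:
  assumes "distinct xs" "j < length xs" "i < length xs - 1"
  shows "remove1 (xs ! j) xs ! i = xs ! (if i < j then i else Suc i)"
proof -
  have xs: "xs = take j xs @ xs ! j # drop (Suc j) xs"
    using assms(2) by (simp add: id_take_nth_drop)
  have "xs ! j \<notin> set (take j xs)"
    using assms(1,2) by (auto simp: in_set_conv_nth nth_eq_iff_index_eq)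
  then have "remove1 (xs ! j) xs = take j xs @ drop (Suc j) xs"
    by (subst xs) (simp add: remove1_append)
  then show ?thesis
    using assms by (auto simp: nth_append min_def)
qed

lemma card_less_nth_sorted:
  assumes "sorted_wrt (<) (xs :: 'b::linorder list)" "j < length xs"
  shows "card {y \<in> set xs. y < xs ! j} = j"
proof -
  have "{y \<in> set xs. y < xs ! j} = (!) xs ` {..<j}"
  proof (intro equalityI subsetI)
    fix y assume "y \<in> {y \<in> set xs. y < xs ! j}"
    then obtain i where i: "i < length xs" "y = xs ! i" "xs ! i < xs ! j"
      by (auto simp: in_set_conv_nth)
    then have "i < j"
      using sorted_wrt_nth_less[OF assms(1), of j i] assms(2) by (metis less_asym linorder_neqE_nat)
    with i show "y \<in> (!) xs ` {..<j}"
      by auto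
  next
    fix y assume "y \<in> (!) xs ` {..<j}"
    then show "y \<in> {y \<in> set xs. y < xs ! j}"
      using assms sorted_wrt_nth_less[OF assms(1)] by auto
  qed
  moreover have "inj_on ((!) xs) {..<j}"
    using assms by (auto simp: inj_on_def nth_eq_iff_index_eq strict_sorted_iff)
  ultimately show ?thesis
    by (simp add: card_image)
qed

lemma laplace_minor_eq_det:
  assumes "finite C" "card C = length rs"
  shows "laplace_minor B rs C {}
       = det (mat (length rs) (length rs) (\<lambda>(i, j). B (rs ! i) (sorted_list_of_set C ! j)))"
  using assms
proof (induction rs arbitrary: C)
  case (Cons r rs)
  define xs where "xs = sorted_list_of_set C"
  define m where "m = length rs"
  define M where "M = mat (Suc m) (Suc m) (\<lambda>(i, j). B ((r # rs) ! i) (xs ! j))"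
  have len: "length xs = Suc m" and sorted: "sorted_wrt (<) xs" and dist: "distinct xs"
    and set: "set xs = C"
    using Cons.prems by (auto simp: xs_def m_def)
  have minor: "laplace_minor B rs (C - {xs ! j}) {} = det (mat_delete M 0 j)" if j: "j < Suc m" for j
  proof -
    have "sorted_list_of_set (C - {xs ! j}) ! i = xs ! (if i < j then i else Suc i)" if "i < m" for i
      using Cons.prems j that len dist by (simp add: sorted_list_of_set_remove xs_def[symmetric] nth_remove1)
    then have "mat_delete M 0 j = mat m m (\<lambda>(i, t). B (rs ! i) (sorted_list_of_set (C - {xs ! j}) ! t))"
      using j by (intro eq_matI) (auto simp: mat_delete_def M_def)
    moreover have "xs ! j \<in> C"
      using j len set by auto
    ultimately show ?thesis
      using Cons.IH[of "C - {xs ! j}"] Cons.prems by (simp add: m_def)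
  qed
  have "det M = (\<Sum>j<Suc m. M $$ (0, j) * cofactor M 0 j)"
    by (rule laplace_expansion_row) (auto simp: M_def)
  also have "\<dots> = (\<Sum>j<Suc m. eps (xs ! j) C * B r (xs ! j) * laplace_minor B rs (C - {xs ! j}) {})"
  proof (rule sum.cong[OF refl])
    fix j assume j: "j \<in> {..<Suc m}"
    have "eps (xs ! j) C = ((-1) ^ j :: 'a)"
      unfolding eps_def using card_less_nth_sorted[OF sorted, of j] j len set by simp
    then show "M $$ (0, j) * cofactor M 0 j = eps (xs ! j) C * B r (xs ! j) * laplace_minor B rs (C - {xs ! j}) {}"
      using j by (simp add: minor cofactor_def M_def)
  qed
  also have "\<dots> = laplace_minor B (r # rs) C {}"
    using sum.reindex_bij_betw[OF bij_betw_nth[OF dist refl refl],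
        of "\<lambda>c. eps c C * B r c * laplace_minor B rs (C - {c}) {}"] len set
    by simp
  finally show ?case
    by (simp add: M_def xs_def m_def)
qed simp

lemma laplace_minor_Cons_shift:
  assumes "finite V" "finite D" "shift V d \<inter> D = {}" "\<forall>x\<in>D. B r x = 0"
  shows "laplace_minor B (r # rs) (shift V d \<union> D) F
       = (\<Sum>s\<in>V. eps (s + d) (shift V d \<union> D) * B r (s + d)
                   * laplace_minor B rs (shift (V - {s}) d \<union> D) F)"
proof -
  let ?C = "shift V d \<union> D"
  have "laplace_minor B (r # rs) ?C F = (\<Sum>x\<in>shift V d. eps x ?C * B r x * laplace_minor B rs (?C - {x}) F)"
    using assms unfolding laplace_minor.simps by (subst sum.union_disjoint) auto
  also have "\<dots> = (\<Sum>s\<in>V. eps (s + d) ?C * B r (s + d) * laplace_minor B rs (?C - {s + d}) F)"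
    unfolding shift_def by (rule sum.reindex_cong[of "\<lambda>s. s + d"]) (auto simp: inj_on_def)
  also have "\<dots> = (\<Sum>s\<in>V. eps (s + d) ?C * B r (s + d) * laplace_minor B rs (shift (V - {s}) d \<union> D) F)"
  proof (rule sum.cong[OF refl])
    fix s assume "s \<in> V"
    then have "s + d \<in> shift V d"
      by (simp add: mem_shift)
    then have "?C - {s + d} = shift (V - {s}) d \<union> D"
      using assms(3) by (auto simp: shift_diff)
    then show "eps (s + d) ?C * B r (s + d) * laplace_minor B rs (?C - {s + d}) F
        = eps (s + d) ?C * B r (s + d) * laplace_minor B rs (shift (V - {s}) d \<union> D) F"
      by simp
  qed
  finally show ?thesis .
qed

lemma eps_shift_Un:
  assumes "\<forall>x\<in>D. s + d \<le> x"
  shows "eps (s + d) (shift J d \<union> D) = eps s J"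
proof -
  have "{i \<in> shift J d \<union> D. i < s + d} = (\<lambda>x. x + d) ` {i \<in> J. i < s}"
    using assms unfolding shift_def by force
  then show ?thesis
    unfolding eps_def by (simp add: card_image inj_on_def)
qed

lemma bottom_mem_if_shift_Diff_notin_subsets_of:
  assumes "finite V" "card V = Suc n" "V \<subseteq> {lo..c}" "s \<in> V"
    and "shift (V - {s}) (-1) \<notin> subsets_of n {lo..c - 1}"
  shows "lo \<in> V - {s}"
proof -
  have "\<not> shift (V - {s}) (-1) \<subseteq> {lo..c - 1}"
    using assms by (auto simp: subsets_of_def)
  then obtain x where "x \<in> shift (V - {s}) (-1)" "x \<notin> {lo..c - 1}"
    by blast
  then have "x + 1 \<in> V - {s}" "x \<notin> {lo..c - 1}"
    by (simp_all add: mem_shift)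
  then show ?thesis
    using assms(3) by (smt (verit) atLeastAtMost_iff subsetD DiffE)
qed

text \<open>One multiplication by a transfer matrix is one step of Laplace expansion: the window
  \<open>[lo, c - 1]\<close> of unused columns, translated by \<open>d\<close>, slides one step to the right.  Row \<open>r\<close>
  of \<open>B\<close> is \<open>bt\<close> up to the sign \<open>\<sigma>\<close>; the dead column \<open>lo + d\<close> kills the terms whose new window
  would leave \<open>[lo, c - 1]\<close>.\<close>
lemma transfer_row_expansion:
  assumes J: "J \<in> subsets_of n {lo..c - 1}" and "lo \<le> c" "d + c \<le> hi"
    and row: "\<And>s. s \<le> c \<Longrightarrow> B r (s + d) = \<sigma> * bt s" "\<And>x. d + c < x \<Longrightarrow> B r x = 0"
    and "\<sigma> * \<sigma> = 1"
    and dead: "\<forall>r'\<in>set rs. B r' (lo + d) = 0" "lo + d \<notin> F"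
  shows "(\<Sum>K\<in>subsets_of n {lo..c - 1}. transfer c bt J K * laplace_minor B rs (shift K (d + 1) \<union> {d + 1 + c..hi}) F)
       = \<sigma> * laplace_minor B (r # rs) (shift J d \<union> {d + c..hi}) F"
proof -
  define X where "X = subsets_of n {lo..c - 1}"
  define V where "V = insert c J"
  define D where "D = {d + c + 1..hi}"
  define minor where "minor s = laplace_minor B rs (shift (V - {s}) d \<union> D) F" for s
  have "J \<subseteq> {lo..c - 1}" "card J = n"
    using J by (auto simp: subsets_of_def)
  then have finJ: "finite J"
    using finite_subset by blast
  have "c \<notin> J" and V: "V \<subseteq> {lo..c}"
    using \<open>J \<subseteq> {lo..c - 1}\<close> \<open>lo \<le> c\<close> by (auto simp: V_def)
  then have cardV: "card V = Suc n"
    using finJ \<open>card J = n\<close> by (simp add: V_def)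
  have C: "shift J d \<union> {d + c..hi} = shift V d \<union> D"
    using \<open>d + c \<le> hi\<close> by (auto simp: V_def D_def)
  have "shift V d \<inter> D = {}"
    using V by (auto simp: D_def mem_shift)
  then have "laplace_minor B (r # rs) (shift J d \<union> {d + c..hi}) F
      = (\<Sum>s\<in>V. eps (s + d) (shift J d \<union> {d + c..hi}) * B r (s + d) * minor s)"
    unfolding C minor_def using finJ row(2)
    by (intro laplace_minor_Cons_shift) (auto simp: V_def D_def)
  also have "\<dots> = \<sigma> * (\<Sum>s\<in>V. eps s J * bt s * (if shift (V - {s}) (-1) \<in> X then minor s else 0))"
    unfolding sum_distrib_left
  proof (rule sum.cong[OF refl])
    fix s assume s: "s \<in> V"
    have "minor s = 0" if "shift (V - {s}) (-1) \<notin> X"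
    proof -
      have "lo \<in> V - {s}"
        using bottom_mem_if_shift_Diff_notin_subsets_of[of V n lo c s] that s finJ cardV V
        by (auto simp: X_def V_def)
      then show ?thesis
        unfolding minor_def using dead
        by (intro laplace_minor_eq_0_if_zero_column[of "lo + d"]) (auto simp: mem_shift)
    qed
    moreover have "eps (s + d) (shift J d \<union> {d + c..hi}) = eps s J"
      using s V by (intro eps_shift_Un) auto
    ultimately show "eps (s + d) (shift J d \<union> {d + c..hi}) * B r (s + d) * minor s
        = \<sigma> * (eps s J * bt s * (if shift (V - {s}) (-1) \<in> X then minor s else 0))"
      using s V row(1) by auto
  qed
  also have "\<dots> = \<sigma> * (\<Sum>s | s \<in> V \<and> shift (V - {s}) (-1) \<in> X. eps s J * bt s * minor s)"
    using finJ by (simp add: V_def sum.inter_filter[symmetric] if_distrib[of "\<lambda>x. _ * x"] cong: if_cong)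
  also have "(\<Sum>s | s \<in> V \<and> shift (V - {s}) (-1) \<in> X. eps s J * bt s * minor s)
      = (\<Sum>K\<in>X. transfer c bt J K * laplace_minor B rs (shift K (d + 1) \<union> {d + 1 + c..hi}) F)"
    unfolding V_def using finJ \<open>c \<notin> J\<close> \<open>card J = n\<close>
    by (subst sum_transfer)
      (auto simp: X_def subsets_of_def finite_subsets_of_atLeastAtMost finite_subset
        minor_def V_def D_def ac_simps)
  finally show ?thesis
    using \<open>\<sigma> * \<sigma> = 1\<close> by (simp add: X_def mult.assoc[symmetric])
qed

lemma mpow_Tmat_eq_laplace_minor:
  fixes S :: "int set" and w :: "int \<Rightarrow> 'a::field_char_0"
  assumes vanish: "\<And>s. a < s \<or> s < -b \<Longrightarrow> beta S w s = 0" and "0 \<le> a" "0 \<le> b"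
    and "J \<in> subsets_of (nat a) {-b..a - 1}"
  shows "mpow (subsets_of (nat a) {-b..a - 1}) (Tmat S w a) m J {0..a - 1}
       = laplace_minor (\<lambda>r c. beta S w (c - r)) [int k + 1 - int m..int k]
           (shift J (int k + 1 - int m) \<union> {int k + 1 - int m + a..int k + a}) {int k + 1..int k + a}"
  using assms(4)
proof (induction m arbitrary: J)
  case 0
  have "shift J (int k + 1) = shift {0..a - 1} (int k + 1) \<longleftrightarrow> J = {0..a - 1}"
    by (rule shift_inj)
  then show ?case
    by auto
next
  case (Suc m)
  define X where "X = subsets_of (nat a) {-b..a - 1}"
  define B where "B = (\<lambda>r c. beta S w (c - r :: int))"
  define d where "d = int k - int m"
  have "{0..a - 1} \<in> X"
    using assms(2,3) by (auto simp: X_def subsets_of_def)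
  then have "mpow X (Tmat S w a) (Suc m) J {0..a - 1} = mmul X (Tmat S w a) (mpow X (Tmat S w a) m) J {0..a - 1}"
    using Suc.prems by (intro mpow_Suc_left) (auto simp: X_def finite_subsets_of_atLeastAtMost)
  also have "\<dots> = (\<Sum>K\<in>X. transfer a (beta S w) J K * mpow X (Tmat S w a) m K {0..a - 1})"
    by (simp add: mmul_def Tmat_def)
  also have "\<dots> = (\<Sum>K\<in>X. transfer a (beta S w) J K
      * laplace_minor B [d + 1..int k] (shift K (d + 1) \<union> {d + 1 + a..int k + a}) {int k + 1..int k + a})"
    using Suc.IH by (intro sum.cong) (auto simp: X_def B_def d_def algebra_simps)
  also have "\<dots> = 1 * laplace_minor B (d # [d + 1..int k]) (shift J d \<union> {d + a..int k + a}) {int k + 1..int k + a}"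
    unfolding X_def using Suc.prems assms(2,3)
    by (intro transfer_row_expansion) (auto simp: B_def d_def intro!: vanish)
  also have "d # [d + 1..int k] = [d..int k]"
    by (simp add: upto_rec1 d_def)
  finally show ?case
    by (simp add: X_def B_def d_def algebra_simps)
qed

lemma Umat_mpow_Tmat_eq_laplace_minor:
  fixes S :: "int set" and w :: "int \<Rightarrow> 'a::field_char_0"
  assumes vanish: "\<And>s. a < s \<or> s < -b \<Longrightarrow> beta S w s = 0" and "1 \<le> a" "0 \<le> b" "l \<le> k"
    and L: "L \<in> subsets_of (nat (a - 1)) {-b - 1..a - 2}"
  shows "mmul (subsets_of (nat a) {-b..a - 1}) (Umat a) (mpow (subsets_of (nat a) {-b..a - 1}) (Tmat S w a) (k - l))
           L {0..a - 1}
       = laplace_minor (\<lambda>r c. beta S w (c - r)) [int l + 1..int k]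
           (shift L (int l + 1) \<union> {int l + a..int k + a}) {int k + 1..int k + a}"
proof -
  define X where "X = subsets_of (nat a) {-b..a - 1}"
  define B where "B = (\<lambda>r c. beta S w (c - r :: int))"
  have "mmul X (Umat a) (mpow X (Tmat S w a) (k - l)) L {0..a - 1}
      = (if insert (a - 1) L \<in> X then mpow X (Tmat S w a) (k - l) (insert (a - 1) L) {0..a - 1} else 0)"
    by (simp add: mmul_def Umat_def X_def finite_subsets_of_atLeastAtMost if_distrib[of "\<lambda>x. x * _"] cong: if_cong)
  also have "\<dots> = laplace_minor B [int l + 1..int k] (shift L (int l + 1) \<union> {int l + a..int k + a}) {int k + 1..int k + a}"
  proof (cases "insert (a - 1) L \<in> X")
    case True
    have "shift (insert (a - 1) L) (int l + 1) \<union> {int l + 1 + a..int k + a} = shift L (int l + 1) \<union> {int l + a..int k + a}"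
      using \<open>l \<le> k\<close> by auto
    with True show ?thesis
      using mpow_Tmat_eq_laplace_minor[OF vanish, where J = "insert (a - 1) L" and m = "k - l" and k = k] assms(2-4)
      by (simp add: X_def B_def algebra_simps)
  next
    case False
    have L: "L \<subseteq> {-b - 1..a - 2}" "card L = nat (a - 1)"
      using assms(5) by (auto simp: subsets_of_def)
    then have "finite L" "a - 1 \<notin> L"
      using finite_subset by auto
    then have "card (insert (a - 1) L) = nat a"
      using L assms(2) by simp
    with False have "\<not> insert (a - 1) L \<subseteq> {-b..a - 1}"
      by (auto simp: X_def subsets_of_def)
    then obtain x where "x \<in> insert (a - 1) L" "x \<notin> {-b..a - 1}"
      by blast
    then have "-b - 1 \<in> L"
      using L assms(2,3) by (smt (verit) atLeastAtMost_iff insert_iff subsetD)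
    then have "laplace_minor B [int l + 1..int k] (shift L (int l + 1) \<union> {int l + a..int k + a}) {int k + 1..int k + a} = 0"
      using \<open>l \<le> k\<close> assms(3)
      by (intro laplace_minor_eq_0_if_zero_column[of "int l - b"]) (auto simp: mem_shift B_def intro!: vanish)
    with False show ?thesis
      by simp
  qed
  finally show ?thesis
    by (simp add: X_def B_def)
qed

lemma mpow_Ttmat_Umat_mpow_Tmat_eq_laplace_minor:
  fixes S :: "int set" and w :: "int \<Rightarrow> 'a::field_char_0"
  assumes vanish: "\<And>s. a < s \<or> s < -b \<Longrightarrow> beta S w s = 0" and "1 \<le> a" "0 \<le> b" "l \<le> k"
    and "L \<in> subsets_of (nat (a - 1)) {-b - 1..a - 2}"
  shows "mmul (subsets_of (nat (a - 1)) {-b - 1..a - 2}) (mpow (subsets_of (nat (a - 1)) {-b - 1..a - 2}) (Ttmat S w a) q)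
           (mmul (subsets_of (nat a) {-b..a - 1}) (Umat a) (mpow (subsets_of (nat a) {-b..a - 1}) (Tmat S w a) (k - l)))
           L {0..a - 1}
       = (-1) ^ q * laplace_minor (\<lambda>r c. beta S w (c - r)) ([int l - int q..int l - 1] @ [int l + 1..int k])
           (shift L (int l - int q + 1) \<union> {int l - int q + a..int k + a}) {int k + 1..int k + a}"
  using assms(5)
proof (induction q arbitrary: L)
  case 0
  then show ?case
    using Umat_mpow_Tmat_eq_laplace_minor[OF vanish assms(2-4)]
    by (subst mmul_mpow_0) (simp_all add: finite_subsets_of_atLeastAtMost)
next
  case (Suc q)
  define Y where "Y = subsets_of (nat (a - 1)) {-b - 1..a - 2}"
  define H where "H = mmul (subsets_of (nat a) {-b..a - 1}) (Umat a) (mpow (subsets_of (nat a) {-b..a - 1}) (Tmat S w a) (k - l))"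
  define B where "B = (\<lambda>r c. beta S w (c - r :: int))"
  define F where "F = {int k + 1..int k + a}"
  define r where "r = int l - int q - 1"
  define rs where "rs = [int l - int q..int l - 1] @ [int l + 1..int k]"
  have "a - 2 = a - 1 - 1"
    by simp
  have "mmul Y (mpow Y (Ttmat S w a) (Suc q)) H L {0..a - 1} = mmul Y (mmul Y (Ttmat S w a) (mpow Y (Ttmat S w a) q)) H L {0..a - 1}"
    unfolding mmul_def[of Y "mpow Y _ _"] mmul_def[of Y "mmul Y _ _"] using Suc.prems
    by (intro sum.cong refl arg_cong2[where f = "(*)"] mpow_Suc_left) (auto simp: Y_def finite_subsets_of_atLeastAtMost)
  also have "\<dots> = (\<Sum>K\<in>Y. transfer (a - 1) (betat S w) L K * ((-1) ^ q
      * laplace_minor B rs (shift K (r + 1 + 1) \<union> {r + 1 + 1 + (a - 1)..int k + a}) F))"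
    unfolding mmul_assoc mmul_def[of Y "Ttmat S w a"]
    using Suc.IH by (intro sum.cong) (auto simp: Ttmat_def Y_def H_def B_def F_def rs_def r_def algebra_simps)
  also have "\<dots> = (-1) ^ q * (\<Sum>K\<in>Y. transfer (a - 1) (betat S w) L K
      * laplace_minor B rs (shift K (r + 1 + 1) \<union> {r + 1 + 1 + (a - 1)..int k + a}) F)"
    by (simp add: sum_distrib_left ac_simps)
  also have "(\<Sum>K\<in>Y. transfer (a - 1) (betat S w) L K
      * laplace_minor B rs (shift K (r + 1 + 1) \<union> {r + 1 + 1 + (a - 1)..int k + a}) F)
      = -1 * laplace_minor B (r # rs) (shift L (r + 1) \<union> {r + 1 + (a - 1)..int k + a}) F"
    using Suc.prems assms(2-4) unfolding Y_def \<open>a - 2 = a - 1 - 1\<close>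
    by (intro transfer_row_expansion)
      (auto simp: B_def F_def rs_def r_def betat_def intro!: vanish)
  also have "r # rs = [int l - int (Suc q)..int l - 1] @ [int l + 1..int k]"
    by (simp add: r_def rs_def upto_rec1)
  finally show ?case
    by (simp add: Y_def H_def B_def F_def r_def algebra_simps)
qed

lemma Fkl_eq_laplace_minor:
  assumes "l \<le> k"
  shows "Fkl S w k l = (-1) ^ l * laplace_minor (\<lambda>r c. beta S w (c - r)) ([0..int l - 1] @ [int l + 1..int k]) {1..int k} {}"
proof -
  define rows where "rows = [0..int l - 1] @ [int l + 1..int k]"
  have len: "length rows = k"
    using assms by (simp add: rows_def)
  have "mat_delete (1\<^sub>m (k + 1) - Amat S w k) l 0
      = mat k k (\<lambda>(i, j). beta S w (sorted_list_of_set {1..int k} ! j - rows ! i))"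
  proof (rule eq_matI)
    fix i j assume "i < dim_row (mat k k (\<lambda>(i, j). beta S w (sorted_list_of_set {1..int k} ! j - rows ! i)))"
      and "j < dim_col (mat k k (\<lambda>(i, j). beta S w (sorted_list_of_set {1..int k} ! j - rows ! i)))"
    then have ij: "i < k" "j < k"
      by auto
    define i' where "i' = (if i < l then i else Suc i)"
    have "rows ! i = int i'"
      using ij assms by (auto simp: rows_def i'_def nth_append)
    moreover have "sorted_list_of_set {1..int k} ! j = int (Suc j)"
      using ij by simp
    moreover have "i' < k + 1"
      using ij by (simp add: i'_def)
    ultimately show "mat_delete (1\<^sub>m (k + 1) - Amat S w k) l 0 $$ (i, j)
        = mat k k (\<lambda>(i, j). beta S w (sorted_list_of_set {1..int k} ! j - rows ! i)) $$ (i, j)"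
      using ij by (auto simp: mat_delete_def Amat_def beta_def i'_def)
  qed (auto simp: Amat_def)
  then show ?thesis
    using laplace_minor_eq_det[of "{1..int k}" rows "\<lambda>r c. beta S w (c - r)"] len
    by (simp add: Fkl_def cofactor_def rows_def)
qed

lemma Fkl_0_eq_Fk: "Fkl S w k 0 = Fk S w k"
proof (cases k)
  case 0
  then show ?thesis
    by (simp add: Fkl_def Fk_def cofactor_def mat_delete_def Amat_def)
next
  case (Suc k')
  have "mat_delete (1\<^sub>m (k + 1) - Amat S w k) 0 0 = 1\<^sub>m k - Amat S w (k - 1)"
    by (rule eq_matI) (auto simp: mat_delete_def Amat_def Suc)
  then show ?thesis
    by (simp add: Fkl_def Fk_def cofactor_def Suc)
qed

theorem mainTheorem8:
  fixes S :: "int set" and w :: "int \<Rightarrow> 'a::field_char_0" and a b :: int and k l :: nat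
  assumes "finite S" and "S \<noteq> {}"
    and "a = Max S" and "b = - Min S" and "a \<ge> 1" and "b \<ge> 1"
    and "l \<le> k"
  shows "Fkl S w k l =
           mmul (subsets_of (nat a) {-b..a-1})
             (mmul (subsets_of (nat (a-1)) {-b-1..a-2})
                (mpow (subsets_of (nat (a-1)) {-b-1..a-2}) (Ttmat S w a) l)
                (Umat a))
             (mpow (subsets_of (nat a) {-b..a-1}) (Tmat S w a) (k - l))
             {0..a-2} {0..a-1}
         \<and> Fkl S w k 0 = Fk S w k"
proof
  have vanish: "beta S w s = 0" if "a < s \<or> s < -b" for s
  proof -
    have "s \<notin> S"
      using that Max_ge[OF \<open>finite S\<close>] Min_le[OF \<open>finite S\<close>] assms(3,4) by force
    moreover have "s \<noteq> 0"
      using that assms(5,6) by auto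
    ultimately show ?thesis
      by (simp add: beta_def wt_def)
  qed
  have "{0..a - 2} \<in> subsets_of (nat (a - 1)) {-b - 1..a - 2}"
    using assms(5,6) by (auto simp: subsets_of_def)
  moreover have "shift {0..a - 2} 1 \<union> {a..int k + a} = {1..int k + a}"
    using assms(5) by auto
  moreover have "laplace_minor B rs {1..int k + a} {int k + 1..int k + a} = laplace_minor B rs {1..int k} {}"
    for B :: "int \<Rightarrow> int \<Rightarrow> 'a" and rs
  proof -
    have "{1..int k + a} - {int k + 1..int k + a} = {1..int k}"
      using assms(5) by auto
    then show ?thesis
      using assms(5) by (subst laplace_minor_remove_top_columns) auto
  qed
  ultimately show "Fkl S w k l = mmul (subsets_of (nat a) {-b..a-1})
      (mmul (subsets_of (nat (a-1)) {-b-1..a-2}) (mpow (subsets_of (nat (a-1)) {-b-1..a-2}) (Ttmat S w a) l) (Umat a))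
      (mpow (subsets_of (nat a) {-b..a-1}) (Tmat S w a) (k - l)) {0..a-2} {0..a-1}"
    using mpow_Ttmat_Umat_mpow_Tmat_eq_laplace_minor[OF vanish, of a b l k "{0..a - 2}" l] assms(5-7)
    by (simp add: mmul_assoc Fkl_eq_laplace_minor)
qed (rule Fkl_0_eq_Fk)

end
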